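(* Let $(X,d)$ be a length space and $\Gamma$ a group acting properly by isometries on $X$ such that $\Gamma\backslash X$ is compact with diameter at most $D$. Suppose there exist $x_0\in X$, $C_0>1$ and $R_0>D$ such that for every $r\in[R_0/2,2R_0]$ one has $0<\mu_{x_0}^\Gamma(B(x_0,r))<\infty$ and $\mu_{x_0}^\Gamma(B(x_0,2r))\le C_0\,\mu_{x_0}^\Gamma(B(x_0,r))$. Then: (i) for every $R_1\ge R_0$ and every $r\in[R_1/2,2R_1]$, $\mu_{x_0}^\Gamma(B(x_0,2r))\le C_0^{3(1+[2R_1/R_0])}\mu_{x_0}^\Gamma(B(x_0,r))$; (ii) $\operatorname{Ent}(X,d)\le\frac{3}{R_0}\ln C_0$.
   Context: A length space: any two points are joined by a continuous path and $d$ is the infimum of lengths of such paths. Proper action: $\{\gamma:d(x,\gamma x)\le R\}$ finite. $\mu_{x_0}^\Gamma=\sum_{\gamma\in\Gamma}\delta_{\gamma x_0}$ is the counting measure of the orbit, so $\mu_{x_0}^\Gamma(B(x_0,r))=\#\{\gamma: d(x_0,\gamma x_0)<r\}$; $B(x,r)$ is the open ball. Quotient distance $\bar d(\Gamma x,\Gamma y)=\inf_\gamma d(x,\gamma y)$. $\operatorname{Ent}(X,d)=\liminf_R\frac1R\ln\mu_{x_0}^\Gamma(B(x_0,R))$. $[t]$ is the integer part. *)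

theory Defs
  imports "HOL-Analysis.Analysis" "HOL-Algebra.Group_Action"
begin

definition curve_length :: "(real \<Rightarrow> 'a::metric_space) \<Rightarrow> ereal" where
  "curve_length p = (SUP (n, t) \<in> {(n, t). t 0 = 0 \<and> t n = 1 \<and> (\<forall>i<n. t i \<le> t (Suc i))}.
      ereal (\<Sum>i<n. dist (p (t i)) (p (t (Suc i)))))"

definition length_space :: "'a::metric_space itself \<Rightarrow> bool" where
  "length_space _ \<longleftrightarrow> (\<forall>x y::'a.
     (\<exists>p. path p \<and> pathstart p = x \<and> pathfinish p = y) \<and>
     ereal (dist x y) = (INF p \<in> {p. path p \<and> pathstart p = x \<and> pathfinish p = y}. curve_length p))"

definition isometric_action :: "('g, 'b) monoid_scheme \<Rightarrow> ('g \<Rightarrow> 'a::metric_space \<Rightarrow> 'a) \<Rightarrow> bool" where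
  "isometric_action G \<phi> \<longleftrightarrow> group_action G UNIV \<phi> \<and>
     (\<forall>g\<in>carrier G. \<forall>x y. dist (\<phi> g x) (\<phi> g y) = dist x y)"

definition proper_action :: "('g, 'b) monoid_scheme \<Rightarrow> ('g \<Rightarrow> 'a::metric_space \<Rightarrow> 'a) \<Rightarrow> bool" where
  "proper_action G \<phi> \<longleftrightarrow> (\<forall>x R. finite {g\<in>carrier G. dist x (\<phi> g x) \<le> R})"

definition orbit_dist :: "('g, 'b) monoid_scheme \<Rightarrow> ('g \<Rightarrow> 'a::metric_space \<Rightarrow> 'a) \<Rightarrow> 'a \<Rightarrow> 'a \<Rightarrow> real" where
  "orbit_dist G \<phi> x y = (INF g \<in> carrier G. dist x (\<phi> g y))"

text \<open>Compactness of the quotient metric space, expressed as sequential compactness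
  (equivalent for metric spaces): every sequence of orbits has a subsequence
  converging to some orbit w.r.t. the quotient distance.\<close>
definition compact_quotient :: "('g, 'b) monoid_scheme \<Rightarrow> ('g \<Rightarrow> 'a::metric_space \<Rightarrow> 'a) \<Rightarrow> bool" where
  "compact_quotient G \<phi> \<longleftrightarrow> (\<forall>s::nat \<Rightarrow> 'a. \<exists>y r. strict_mono r \<and>
      (\<lambda>n. orbit_dist G \<phi> (s (r n)) y) \<longlonglongrightarrow> 0)"

definition quotient_diam_le :: "('g, 'b) monoid_scheme \<Rightarrow> ('g \<Rightarrow> 'a::metric_space \<Rightarrow> 'a) \<Rightarrow> real \<Rightarrow> bool" where
  "quotient_diam_le G \<phi> D \<longleftrightarrow> (\<forall>x y. orbit_dist G \<phi> x y \<le> D)"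

text \<open>Orbit counting measure of the open ball: #{g. d(x0, g x0) < r}.\<close>
definition orbit_set :: "('g, 'b) monoid_scheme \<Rightarrow> ('g \<Rightarrow> 'a::metric_space \<Rightarrow> 'a) \<Rightarrow> 'a \<Rightarrow> real \<Rightarrow> 'g set" where
  "orbit_set G \<phi> x0 r = {g \<in> carrier G. dist x0 (\<phi> g x0) < r}"

definition orbit_count :: "('g, 'b) monoid_scheme \<Rightarrow> ('g \<Rightarrow> 'a::metric_space \<Rightarrow> 'a) \<Rightarrow> 'a \<Rightarrow> real \<Rightarrow> real" where
  "orbit_count G \<phi> x0 r = real (card (orbit_set G \<phi> x0 r))"

definition entropy :: "('g, 'b) monoid_scheme \<Rightarrow> ('g \<Rightarrow> 'a::metric_space \<Rightarrow> 'a) \<Rightarrow> 'a \<Rightarrow> ereal" where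
  "entropy G \<phi> x0 = Liminf at_top (\<lambda>R. ereal (ln (orbit_count G \<phi> x0 R) / R))"

end

theory Submission
  imports Defs
begin

text \<open>Write \<open>|\<gamma>| = d(x\<^sub>0, \<gamma> x\<^sub>0)\<close> and \<open>N(r) = #{\<gamma>. |\<gamma>| < r}\<close>.
  In a length space whose quotient has diameter \<open>\<le> D < D'\<close>, every \<open>\<gamma>\<close> with \<open>|\<gamma>| < a + b\<close>
  factors as \<open>\<gamma> = \<alpha>\<beta>\<close> with \<open>|\<alpha>| < a + D'\<close> and \<open>|\<beta>| < b + D'\<close>: cut a short path from
  \<open>x\<^sub>0\<close> to \<open>\<gamma>x\<^sub>0\<close> at distance \<open>a\<close> from \<open>x\<^sub>0\<close> and move the cut point to a nearby orbit point
  \<open>\<alpha>x\<^sub>0\<close>. The map \<open>(\<gamma>, \<delta>) \<mapsto> (\<alpha>\<delta>, \<delta>\<^sup>-\<^sup>1\<beta>)\<close> is injective, because the product of its two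
  components is \<open>\<gamma>\<close>; hence \<open>N(a+b) N(e) \<le> N(a+D'+e) N(b+D'+e)\<close>. Choosing
  \<open>e = R\<^sub>0/2\<close> and \<open>a + D' + e = \<rho>\<close>, \<open>b + D' + e = 4R\<^sub>0\<close> gives
  \<open>N(\<rho> + R\<^sub>0) N(R\<^sub>0/2) \<le> N(\<rho>) N(4R\<^sub>0) \<le> C\<^sub>0\<^sup>3 N(\<rho>) N(R\<^sub>0/2)\<close>, so each step of length \<open>R\<^sub>0\<close>
  costs at most a factor \<open>C\<^sub>0\<^sup>3\<close>. Both claims follow by iterating this step.\<close>

lemma finite_orbit_set:
  assumes "proper_action G \<phi>"
  shows "finite (orbit_set G \<phi> x0 r)"
proof (rule finite_subset)
  show "finite {g\<in>carrier G. dist x0 (\<phi> g x0) \<le> r}"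
    using assms unfolding proper_action_def by blast
qed (auto simp: orbit_set_def)

lemma orbit_count_mono:
  assumes "proper_action G \<phi>" "r \<le> s"
  shows "orbit_count G \<phi> x0 r \<le> orbit_count G \<phi> x0 s"
proof -
  have "orbit_set G \<phi> x0 r \<subseteq> orbit_set G \<phi> x0 s"
    using assms(2) unfolding orbit_set_def by auto
  then show ?thesis
    unfolding orbit_count_def using finite_orbit_set[OF assms(1)] by (simp add: card_mono)
qed

lemma quotient_diam_nonneg:
  assumes "group G" "quotient_diam_le G \<phi> D"
  shows "0 \<le> D"
proof -
  have "carrier G \<noteq> {}" using group.is_monoid[OF assms(1)] monoid.one_closed by blast
  then have "0 \<le> orbit_dist G \<phi> x x" for x
    unfolding orbit_dist_def by (rule cINF_greatest) auto
  then show ?thesis using assms(2) unfolding quotient_diam_le_def by (meson order_trans)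
qed

lemma isometric_action_one:
  assumes "isometric_action G \<phi>"
  shows "\<phi> \<one>\<^bsub>G\<^esub> x = x"
proof -
  interpret group_action G UNIV \<phi> using assms unfolding isometric_action_def by blast
  show ?thesis using id_eq_one by (metis restrict_apply' UNIV_I)
qed

lemma isometric_action_mult:
  assumes "isometric_action G \<phi>" "g \<in> carrier G" "h \<in> carrier G"
  shows "\<phi> (g \<otimes>\<^bsub>G\<^esub> h) x = \<phi> g (\<phi> h x)"
proof -
  interpret group_action G UNIV \<phi> using assms unfolding isometric_action_def by blast
  show ?thesis using composition_rule assms by blast
qed

lemma isometric_action_dist:
  assumes "isometric_action G \<phi>" "g \<in> carrier G"
  shows "dist (\<phi> g x) (\<phi> g y) = dist x y"
  using assms unfolding isometric_action_def by blast

lemma dist_orbit_inv_mult: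
  fixes G (structure)
  assumes "group G" "isometric_action G \<phi>" "g \<in> carrier G" "h \<in> carrier G"
  shows "dist x (\<phi> (inv g \<otimes> h) x) = dist (\<phi> g x) (\<phi> h x)"
proof -
  interpret group G by fact
  have "dist x (\<phi> (inv g \<otimes> h) x) = dist (\<phi> g x) (\<phi> g (\<phi> (inv g \<otimes> h) x))"
    using isometric_action_dist[OF assms(2,3)] by simp
  also have "\<phi> g (\<phi> (inv g \<otimes> h) x) = \<phi> (g \<otimes> (inv g \<otimes> h)) x"
    using isometric_action_mult[OF assms(2)] assms by simp
  also have "g \<otimes> (inv g \<otimes> h) = h"
    using assms by (simp flip: m_assoc)
  finally show ?thesis .
qed

lemma dist_orbit_mult_le:
  fixes G (structure)
  assumes "isometric_action G \<phi>" "g \<in> carrier G" "h \<in> carrier G"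
  shows "dist x (\<phi> (g \<otimes> h) x) \<le> dist x (\<phi> g x) + dist x (\<phi> h x)"
proof -
  have "dist x (\<phi> (g \<otimes> h) x) \<le> dist x (\<phi> g x) + dist (\<phi> g x) (\<phi> g (\<phi> h x))"
    using isometric_action_mult[OF assms] dist_triangle by metis
  then show ?thesis using isometric_action_dist[OF assms(1,2)] by simp
qed

subsection \<open>Splitting orbit points along paths\<close>

lemma length_space_path_through:
  fixes x y :: "'a::metric_space"
  assumes "length_space TYPE('a)" "dist x y < L"
  obtains p where "path p" "p 0 = x" "p 1 = y"
    "\<And>t. t \<in> {0..1} \<Longrightarrow> dist x (p t) + dist (p t) y < L"
proof -
  have "(INF p \<in> {p. path p \<and> pathstart p = x \<and> pathfinish p = y}. curve_length p) < ereal L"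
    using assms unfolding length_space_def by (metis ereal_less(3) less_ereal.simps(1))
  then obtain p where p: "path p" "pathstart p = x" "pathfinish p = y" "curve_length p < ereal L"
    by (auto simp: INF_less_iff)
  have "dist x (p t) + dist (p t) y < L" if t: "t \<in> {0..1}" for t
  proof -
    define tt where "tt = (\<lambda>i::nat. if i = 0 then 0 else if i = 1 then t else (1::real))"
    have "(2, tt) \<in> {(n, t). t 0 = 0 \<and> t n = 1 \<and> (\<forall>i<n. t i \<le> t (Suc i))}"
      using t unfolding tt_def by (auto simp: less_2_cases_iff)
    then have "ereal (\<Sum>i<2. dist (p (tt i)) (p (tt (Suc i)))) \<le> curve_length p"
      unfolding curve_length_def by (rule SUP_upper2) auto
    moreover have "(\<Sum>i<2. dist (p (tt i)) (p (tt (Suc i)))) = dist x (p t) + dist (p t) y"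
      using p(2,3) by (simp add: tt_def numeral_2_eq_2 pathstart_def pathfinish_def)
    ultimately have "ereal (dist x (p t) + dist (p t) y) \<le> curve_length p" by simp
    then have "ereal (dist x (p t) + dist (p t) y) < ereal L" using p(4) by (rule order.strict_trans1)
    then show ?thesis by simp
  qed
  then show ?thesis using that p by (auto simp: pathstart_def pathfinish_def)
qed

text \<open>The alternative \<open>\<alpha> = \<one>\<close> covers the degenerate case \<open>a + D' = 0\<close>, where no element
  satisfies the strict bound.\<close>

lemma orbit_point_factorization:
  fixes G (structure) and \<phi> :: "'g \<Rightarrow> 'a::metric_space \<Rightarrow> 'a"
  assumes ls: "length_space TYPE('a)" and grp: "group G" and iso: "isometric_action G \<phi>"
    and qd: "quotient_diam_le G \<phi> D" and "D < D'" and "0 < b + D'"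
    and \<gamma>: "\<gamma> \<in> carrier G" and d\<gamma>: "dist x0 (\<phi> \<gamma> x0) < a + b"
  shows "\<exists>\<alpha>\<in>carrier G. (\<alpha> = \<one> \<or> dist x0 (\<phi> \<alpha> x0) < a + D') \<and>
           dist x0 (\<phi> (inv \<alpha> \<otimes> \<gamma>) x0) < b + D'"
proof -
  interpret group G by fact
  have "0 \<le> D" using quotient_diam_nonneg[OF grp qd] .
  consider "dist x0 (\<phi> \<gamma> x0) < a" | "a \<le> 0" | "0 < a" "a \<le> dist x0 (\<phi> \<gamma> x0)" by linarith
  then show ?thesis
  proof cases
    case 1
    have "inv \<gamma> \<otimes> \<gamma> = \<one>" using \<gamma> by simp
    then show ?thesis
      using 1 \<gamma> assms isometric_action_one[OF iso] \<open>0 \<le> D\<close> by (intro bexI[of _ \<gamma>]) auto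
  next
    case 2
    have "inv \<one> \<otimes> \<gamma> = \<gamma>" using \<gamma> by simp
    then show ?thesis using 2 \<gamma> d\<gamma> \<open>0 \<le> D\<close> \<open>D < D'\<close> by (intro bexI[of _ \<one>]) auto
  next
    case 3
    obtain p where p: "path p" "p 0 = x0" "p 1 = \<phi> \<gamma> x0"
      and p_short: "\<And>t. t \<in> {0..1} \<Longrightarrow> dist x0 (p t) + dist (p t) (\<phi> \<gamma> x0) < a + b"
      using length_space_path_through[OF ls d\<gamma>] by blast
    have "continuous_on {0..1} (\<lambda>t. dist x0 (p t))"
      using p(1) unfolding path_def by (intro continuous_intros)
    then obtain t where t: "t \<in> {0..1}" "dist x0 (p t) = a"
      using IVT'[of "\<lambda>t. dist x0 (p t)" 0 a 1] p 3 by auto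
    have "orbit_dist G \<phi> (p t) x0 < D'"
      using qd \<open>D < D'\<close> unfolding quotient_diam_le_def by (meson le_less_trans)
    then obtain \<alpha> where \<alpha>: "\<alpha> \<in> carrier G" "dist (p t) (\<phi> \<alpha> x0) < D'"
      unfolding orbit_dist_def
      by (subst (asm) cINF_less_iff) (auto intro!: bdd_belowI[of _ 0])
    have "dist x0 (\<phi> \<alpha> x0) < a + D'"
      using dist_triangle[of x0 "\<phi> \<alpha> x0" "p t"] t \<alpha> by auto
    moreover have "dist (p t) (\<phi> \<gamma> x0) < b" using p_short[OF t(1)] t(2) by simp
    then have "dist x0 (\<phi> (inv \<alpha> \<otimes> \<gamma>) x0) < b + D'"
      using dist_orbit_inv_mult[OF grp iso \<alpha>(1) \<gamma>] dist_triangle[of "\<phi> \<alpha> x0" "\<phi> \<gamma> x0" "p t"] \<alpha>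
      by (simp add: dist_commute)
    ultimately show ?thesis using \<alpha> by blast
  qed
qed

subsection \<open>The product inequality for orbit counts\<close>

lemma (in group) inj_on_factor_exchange:
  assumes "\<alpha> \<in> S \<rightarrow> carrier G" "S \<subseteq> carrier G" "T \<subseteq> carrier G"
  shows "inj_on (\<lambda>(\<gamma>, \<delta>). (\<alpha> \<gamma> \<otimes> \<delta>, inv \<delta> \<otimes> (inv (\<alpha> \<gamma>) \<otimes> \<gamma>))) (S \<times> T)"
proof (rule inj_onI, clarsimp)
  have cancel: "x \<otimes> (inv x \<otimes> y) = y" if "x \<in> carrier G" "y \<in> carrier G" for x y
    using that by (simp flip: m_assoc)
  have product: "(\<alpha> \<gamma> \<otimes> \<delta>) \<otimes> (inv \<delta> \<otimes> (inv (\<alpha> \<gamma>) \<otimes> \<gamma>)) = \<gamma>" if "\<gamma> \<in> S" "\<delta> \<in> T" for \<gamma> \<delta>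
  proof -
    have "\<alpha> \<gamma> \<in> carrier G" "\<gamma> \<in> carrier G" "\<delta> \<in> carrier G" using that assms by auto
    then show ?thesis by (simp add: m_assoc cancel)
  qed
  fix \<gamma> \<delta> \<gamma>' \<delta>'
  assume in_ST: "\<gamma> \<in> S" "\<delta> \<in> T" "\<gamma>' \<in> S" "\<delta>' \<in> T"
    and eq: "\<alpha> \<gamma> \<otimes> \<delta> = \<alpha> \<gamma>' \<otimes> \<delta>'" "inv \<delta> \<otimes> (inv (\<alpha> \<gamma>) \<otimes> \<gamma>) = inv \<delta>' \<otimes> (inv (\<alpha> \<gamma>') \<otimes> \<gamma>')"
  have "\<gamma> = \<gamma>'" using product[of \<gamma> \<delta>] product[of \<gamma>' \<delta>'] in_ST eq by simp
  moreover have "\<alpha> \<gamma> \<in> carrier G" "\<delta> \<in> carrier G" "\<delta>' \<in> carrier G" using in_ST assms by auto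
  ultimately show "\<gamma> = \<gamma>' \<and> \<delta> = \<delta>'" using eq(1) by simp
qed

lemma orbit_count_product_le:
  fixes G (structure) and \<phi> :: "'g \<Rightarrow> 'a::metric_space \<Rightarrow> 'a"
  assumes ls: "length_space TYPE('a)" and grp: "group G" and iso: "isometric_action G \<phi>"
    and pr: "proper_action G \<phi>" and qd: "quotient_diam_le G \<phi> D"
    and "D < D'" and "0 < b + D'" and "0 \<le> a + D'"
  shows "orbit_count G \<phi> x0 (a + b) * orbit_count G \<phi> x0 e
      \<le> orbit_count G \<phi> x0 (a + D' + e) * orbit_count G \<phi> x0 (b + D' + e)"
proof -
  interpret group G by fact
  define factor_ok where "factor_ok = (\<lambda>\<gamma> \<alpha>. \<alpha> \<in> carrier G \<and>
      (\<alpha> = \<one> \<or> dist x0 (\<phi> \<alpha> x0) < a + D') \<and> dist x0 (\<phi> (inv \<alpha> \<otimes> \<gamma>) x0) < b + D')"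
  define \<alpha> where "\<alpha> = (\<lambda>\<gamma>. SOME \<alpha>. factor_ok \<gamma> \<alpha>)"
  define S where "S = orbit_set G \<phi> x0 (a + b)"
  define T where "T = orbit_set G \<phi> x0 e"
  define f where "f = (\<lambda>(\<gamma>, \<delta>). (\<alpha> \<gamma> \<otimes> \<delta>, inv \<delta> \<otimes> (inv (\<alpha> \<gamma>) \<otimes> \<gamma>)))"
  have \<alpha>: "factor_ok \<gamma> (\<alpha> \<gamma>)" if "\<gamma> \<in> S" for \<gamma>
  proof -
    have "\<exists>\<alpha>. factor_ok \<gamma> \<alpha>"
      using orbit_point_factorization[OF ls grp iso qd assms(6,7), of \<gamma> x0 a] that
      unfolding factor_ok_def S_def orbit_set_def by auto
    then show ?thesis unfolding \<alpha>_def by (rule someI_ex)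
  qed
  have ST: "S \<subseteq> carrier G" "T \<subseteq> carrier G" by (auto simp: S_def T_def orbit_set_def)
  have "f ` (S \<times> T) \<subseteq> orbit_set G \<phi> x0 (a + D' + e) \<times> orbit_set G \<phi> x0 (b + D' + e)"
  proof (rule image_subsetI)
    fix p assume "p \<in> S \<times> T"
    then obtain \<gamma> \<delta> where p: "p = (\<gamma>, \<delta>)" and \<gamma>: "\<gamma> \<in> S" and \<delta>: "\<delta> \<in> T" by blast
    define \<beta> where "\<beta> = inv (\<alpha> \<gamma>) \<otimes> \<gamma>"
    have \<gamma>\<delta>: "\<gamma> \<in> carrier G" "\<delta> \<in> carrier G" "dist x0 (\<phi> \<delta> x0) < e"
      using \<gamma> \<delta> by (auto simp: S_def T_def orbit_set_def)
    have \<alpha>\<gamma>: "\<alpha> \<gamma> \<in> carrier G" "\<alpha> \<gamma> = \<one> \<or> dist x0 (\<phi> (\<alpha> \<gamma>) x0) < a + D'"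
      "dist x0 (\<phi> \<beta> x0) < b + D'"
      using \<alpha>[OF \<gamma>] unfolding factor_ok_def \<beta>_def by auto
    have \<beta>: "\<beta> \<in> carrier G" using \<alpha>\<gamma>(1) \<gamma>\<delta>(1) by (simp add: \<beta>_def)
    have "dist x0 (\<phi> (\<alpha> \<gamma> \<otimes> \<delta>) x0) < a + D' + e"
    proof (cases "\<alpha> \<gamma> = \<one>")
      case True
      then show ?thesis using \<gamma>\<delta> \<open>0 \<le> a + D'\<close> by simp
    next
      case False
      then show ?thesis
        using dist_orbit_mult_le[OF iso \<alpha>\<gamma>(1) \<gamma>\<delta>(2), where x = x0] \<alpha>\<gamma>(2) \<gamma>\<delta>(3) by simp
    qed
    moreover have "dist x0 (\<phi> (inv \<delta> \<otimes> \<beta>) x0) < b + D' + e"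
    proof -
      have "dist x0 (\<phi> (inv \<delta> \<otimes> \<beta>) x0) = dist (\<phi> \<delta> x0) (\<phi> \<beta> x0)"
        by (rule dist_orbit_inv_mult[OF grp iso \<gamma>\<delta>(2) \<beta>])
      also have "\<dots> \<le> dist x0 (\<phi> \<delta> x0) + dist x0 (\<phi> \<beta> x0)"
        by (metis dist_commute dist_triangle)
      finally show ?thesis using \<gamma>\<delta>(3) \<alpha>\<gamma>(3) by simp
    qed
    ultimately show "f p \<in> orbit_set G \<phi> x0 (a + D' + e) \<times> orbit_set G \<phi> x0 (b + D' + e)"
      using \<alpha>\<gamma>(1) \<gamma>\<delta> \<beta> by (simp add: p f_def \<beta>_def orbit_set_def)
  qed
  moreover have "inj_on f (S \<times> T)"
    unfolding f_def by (rule inj_on_factor_exchange) (use \<alpha> ST in \<open>auto simp: factor_ok_def\<close>)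
  moreover have "finite (orbit_set G \<phi> x0 (a + D' + e) \<times> orbit_set G \<phi> x0 (b + D' + e))"
    using finite_orbit_set[OF pr] by simp
  ultimately have "card (S \<times> T)
      \<le> card (orbit_set G \<phi> x0 (a + D' + e) \<times> orbit_set G \<phi> x0 (b + D' + e))"
    by (intro card_inj_on_le)
  then show ?thesis
    unfolding orbit_count_def S_def T_def by (simp add: card_cartesian_product flip: of_nat_mult)
qed

lemma orbit_count_shift_le:
  fixes \<phi> :: "'g \<Rightarrow> 'a::metric_space \<Rightarrow> 'a"
  assumes ls: "length_space TYPE('a)" and grp: "group G" and iso: "isometric_action G \<phi>"
    and pr: "proper_action G \<phi>" and qd: "quotient_diam_le G \<phi> D" and "D < R0"
    and pos: "0 < orbit_count G \<phi> x0 (R0/2)"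
    and doubling: "orbit_count G \<phi> x0 (4*R0) \<le> K * orbit_count G \<phi> x0 (R0/2)"
    and "R0/2 \<le> \<rho>"
  shows "orbit_count G \<phi> x0 (\<rho> + R0) \<le> K * orbit_count G \<phi> x0 \<rho>"
proof -
  let ?N = "orbit_count G \<phi> x0"
  define D' where "D' = (D + R0) / 2"
  have "D < D'" "D' < R0" using \<open>D < R0\<close> by (simp_all add: D'_def)
  have "0 \<le> D" using quotient_diam_nonneg[OF grp qd] .
  define a where "a = \<rho> - D' - R0/2"
  define b where "b = 4*R0 - D' - R0/2"
  have "?N (a + b) * ?N (R0/2) \<le> ?N (a + D' + R0/2) * ?N (b + D' + R0/2)"
    using \<open>D < D'\<close> \<open>D' < R0\<close> \<open>R0/2 \<le> \<rho>\<close> \<open>0 \<le> D\<close> unfolding a_def b_def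
    by (intro orbit_count_product_le[OF ls grp iso pr qd \<open>D < D'\<close>]) auto
  also have "\<dots> = ?N \<rho> * ?N (4*R0)" by (simp add: a_def b_def)
  also have "\<dots> \<le> ?N \<rho> * (K * ?N (R0/2))"
    using doubling by (intro mult_left_mono) (auto simp: orbit_count_def)
  finally have "?N (a + b) * ?N (R0/2) \<le> (K * ?N \<rho>) * ?N (R0/2)" by (simp add: mult_ac)
  then have "?N (a + b) \<le> K * ?N \<rho>" using pos by simp
  moreover have "?N (\<rho> + R0) \<le> ?N (a + b)"
    using \<open>D' < R0\<close> unfolding a_def b_def by (intro orbit_count_mono[OF pr]) simp
  ultimately show ?thesis by linarith
qed

subsection \<open>Growth estimates\<close>

lemma Liminf_ln_div_le_of_exp_bound:
  fixes f :: "real \<Rightarrow> real"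
  assumes "0 < c" and bound: "eventually (\<lambda>R. 0 < f R \<and> f R \<le> c * exp (L * R)) at_top"
  shows "Liminf at_top (\<lambda>R. ereal (ln (f R) / R)) \<le> ereal L"
proof -
  have "eventually (\<lambda>R. ln (f R) / R \<le> L + ln c / R) at_top"
    using bound eventually_gt_at_top[of 0]
  proof eventually_elim
    case (elim R)
    then have "ln (f R) \<le> ln (c * exp (L * R))" using \<open>0 < c\<close> by simp
    also have "\<dots> = ln c + L * R" using \<open>0 < c\<close> by (simp add: ln_mult)
    finally have "ln (f R) \<le> ln c + L * R" .
    then show ?case using elim by (simp add: field_simps)
  qed
  then have "Liminf at_top (\<lambda>R. ereal (ln (f R) / R))
      \<le> Liminf at_top (\<lambda>R. ereal (L + ln c / R))"
    by (intro Liminf_mono) (auto elim: eventually_mono)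
  also have "\<dots> = ereal L"
  proof (rule lim_imp_Liminf)
    have "((\<lambda>R. L + ln c / R) \<longlongrightarrow> L + 0) at_top"
      by (intro tendsto_add tendsto_const tendsto_divide_0[OF tendsto_const]
          filterlim_at_top_imp_at_infinity filterlim_ident)
    then show "((\<lambda>R. ereal (L + ln c / R)) \<longlongrightarrow> ereal L) at_top"
      by (intro tendsto_ereal) simp
  qed simp
  finally show ?thesis .
qed

lemma less_one_plus_nat_floor: "(x::real) < 1 + real (nat \<lfloor>x\<rfloor>)"
  by linarith

lemma power_nat_floor_le_exp:
  fixes K h R :: real
  assumes "1 \<le> K" "0 < h" "0 \<le> R"
  shows "K ^ nat \<lfloor>R / h\<rfloor> \<le> exp (ln K / h * R)"
proof -
  have "real (nat \<lfloor>R / h\<rfloor>) \<le> R / h" using assms by simp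
  then have exponent: "real (nat \<lfloor>R / h\<rfloor>) * ln K \<le> ln K / h * R"
    using mult_right_mono[of "real (nat \<lfloor>R / h\<rfloor>)" "R / h" "ln K"] assms(1) by (simp add: mult_ac)
  have "K ^ nat \<lfloor>R / h\<rfloor> = exp (real (nat \<lfloor>R / h\<rfloor>) * ln K)"
    using assms(1) by (simp add: exp_of_nat_mult)
  also have "\<dots> \<le> exp (ln K / h * R)" using exponent by simp
  finally show ?thesis .
qed

locale shift_bounded =
  fixes f :: "real \<Rightarrow> real" and s h K :: real
  assumes mono: "mono f"
    and shift: "\<And>\<rho>. s \<le> \<rho> \<Longrightarrow> f (\<rho> + h) \<le> K * f \<rho>"
    and step_pos: "0 < h" and factor_ge_1: "1 \<le> K"
begin

lemma iterate_le:
  assumes "s \<le> \<rho>"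
  shows "f (\<rho> + real n * h) \<le> K ^ n * f \<rho>"
proof (induction n)
  case (Suc n)
  have "0 \<le> real n * h" using step_pos by simp
  then have "f ((\<rho> + real n * h) + h) \<le> K * f (\<rho> + real n * h)"
    using assms by (intro shift) linarith
  then have "f (\<rho> + real (Suc n) * h) \<le> K * f (\<rho> + real n * h)"
    by (simp add: algebra_simps)
  also have "\<dots> \<le> K * (K ^ n * f \<rho>)" using Suc factor_ge_1 by (simp add: mult_left_mono)
  finally show ?case by (simp add: mult.assoc)
qed simp

lemma le_power_mult:
  assumes "s \<le> r" "t \<le> real n * h"
  shows "f (r + t) \<le> K ^ n * f r"
proof -
  have "f (r + t) \<le> f (r + real n * h)" using mono assms(2) by (simp add: monoD)
  also have "\<dots> \<le> K ^ n * f r" using assms(1) by (rule iterate_le)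
  finally show ?thesis .
qed

lemma Liminf_ln_div_le:
  assumes "0 < f s" "s \<le> h"
  shows "Liminf at_top (\<lambda>R. ereal (ln (f R) / R)) \<le> ereal (ln K / h)"
proof (rule Liminf_ln_div_le_of_exp_bound)
  have pos: "0 < f R" if "s \<le> R" for R
    using assms(1) monoD[OF mono that] by linarith
  show "0 < f h" by (rule pos[OF assms(2)])
  show "eventually (\<lambda>R. 0 < f R \<and> f R \<le> f h * exp (ln K / h * R)) at_top"
    using eventually_ge_at_top[of h]
  proof eventually_elim
    case (elim R)
    have "R - h \<le> real (nat \<lfloor>R / h\<rfloor>) * h"
      using less_one_plus_nat_floor[of "R / h"] step_pos by (simp add: field_simps)
    then have "f (h + (R - h)) \<le> K ^ nat \<lfloor>R / h\<rfloor> * f h"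
      using assms(2) by (rule le_power_mult[rotated])
    also have "\<dots> \<le> exp (ln K / h * R) * f h"
      using power_nat_floor_le_exp[of K h R] factor_ge_1 step_pos elim pos[OF assms(2)]
      by (intro mult_right_mono) auto
    finally show ?case using pos[of R] assms(2) elim by (simp add: mult.commute)
  qed
qed

end

lemma shift_bounded_orbit_count:
  fixes \<phi> :: "'g \<Rightarrow> 'a::metric_space \<Rightarrow> 'a"
  assumes "length_space TYPE('a)" "group G" "isometric_action G \<phi>" "proper_action G \<phi>"
    and "quotient_diam_le G \<phi> D" "1 < C0" "D < R0"
    and pos: "0 < orbit_count G \<phi> x0 (R0/2)"
    and doubling: "\<And>r. r \<in> {R0/2..2*R0} \<Longrightarrow>
      orbit_count G \<phi> x0 (2*r) \<le> C0 * orbit_count G \<phi> x0 r"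
  shows "shift_bounded (orbit_count G \<phi> x0) (R0/2) R0 (C0^3)"
proof
  let ?N = "orbit_count G \<phi> x0"
  have "0 < R0" using quotient_diam_nonneg[OF assms(2,5)] \<open>D < R0\<close> by linarith
  then show "0 < R0" "1 \<le> C0^3" using \<open>1 < C0\<close> by simp_all
  have "?N (4*R0) \<le> C0 * ?N (2*R0)" using doubling[of "2*R0"] \<open>0 < R0\<close> by simp
  also have "\<dots> \<le> C0 * (C0 * ?N R0)" using doubling[of R0] \<open>0 < R0\<close> \<open>1 < C0\<close> by simp
  also have "\<dots> \<le> C0 * (C0 * (C0 * ?N (R0/2)))"
    using doubling[of "R0/2"] \<open>0 < R0\<close> \<open>1 < C0\<close> by simp
  finally have "?N (4*R0) \<le> C0^3 * ?N (R0/2)" by (simp add: power3_eq_cube mult.assoc)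
  then show "?N (\<rho> + R0) \<le> C0^3 * ?N \<rho>" if "R0/2 \<le> \<rho>" for \<rho>
    using orbit_count_shift_le[OF assms(1-5,7) pos] that by blast
  show "mono ?N" using orbit_count_mono[OF assms(4)] by (rule monoI)
qed

theorem lemma3p9:
  fixes G :: "('g, 'b) monoid_scheme" and \<phi> :: "'g \<Rightarrow> 'a::metric_space \<Rightarrow> 'a"
    and x0 :: 'a and D C0 R0 :: real
  assumes "length_space TYPE('a)"
    and "group G"
    and "isometric_action G \<phi>"
    and "proper_action G \<phi>"
    and "compact_quotient G \<phi>"
    and "quotient_diam_le G \<phi> D"
    and "C0 > 1" and "R0 > D"
    and hyp: "\<forall>r \<in> {R0/2..2*R0}. finite (orbit_set G \<phi> x0 r) \<and> 0 < orbit_count G \<phi> x0 r \<and>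
               orbit_count G \<phi> x0 (2*r) \<le> C0 * orbit_count G \<phi> x0 r"
  shows "(\<forall>R1 \<ge> R0. \<forall>r \<in> {R1/2..2*R1}.
           orbit_count G \<phi> x0 (2*r) \<le> C0 ^ (3 * (1 + nat \<lfloor>2*R1/R0\<rfloor>)) * orbit_count G \<phi> x0 r)
         \<and> entropy G \<phi> x0 \<le> ereal (3 / R0 * ln C0)"
proof -
  let ?N = "orbit_count G \<phi> x0"
  have "0 < R0" using quotient_diam_nonneg[OF assms(2,6)] \<open>R0 > D\<close> by linarith
  have pos: "0 < ?N (R0/2)" using hyp \<open>0 < R0\<close> by auto
  interpret shift_bounded ?N "R0/2" R0 "C0^3"
    using hyp by (intro shift_bounded_orbit_count[OF assms(1-4,6-8) pos]) blast
  have "?N (2*r) \<le> C0 ^ (3 * (1 + nat \<lfloor>2*R1/R0\<rfloor>)) * ?N r"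
    if "R0 \<le> R1" "r \<in> {R1/2..2*R1}" for R1 r
  proof -
    have "2*R1 < real (1 + nat \<lfloor>2*R1/R0\<rfloor>) * R0"
      using less_one_plus_nat_floor[of "2*R1/R0"] \<open>0 < R0\<close> by (simp add: field_simps)
    then have "?N (r + r) \<le> (C0^3) ^ (1 + nat \<lfloor>2*R1/R0\<rfloor>) * ?N r"
      using that by (intro le_power_mult) auto
    then show ?thesis by (simp only: mult_2 power_mult)
  qed
  moreover have "entropy G \<phi> x0 \<le> ereal (3 / R0 * ln C0)"
  proof -
    have "Liminf at_top (\<lambda>R. ereal (ln (?N R) / R)) \<le> ereal (ln (C0^3) / R0)"
      using pos \<open>0 < R0\<close> by (intro Liminf_ln_div_le) simp_all
    then show ?thesis unfolding entropy_def using \<open>C0 > 1\<close> by (simp add: ln_realpow)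
  qed
  ultimately show ?thesis by blast
qed

end
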